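(* Every real planar quadratic differential system having a finite semi-elemental double saddle-node $\overline{sn}_{(2)}$ and an infinite saddle-node of type $\overline{\binom{0}{2}}SN$ located at the point at infinity in the direction defined by the eigenvector of the saddle-node with null eigenvalue can be brought, via an affine change of coordinates and a time rescaling, to the normal form $$\dot x = x^2+2hxy+ky^2,\qquad \dot y = y+xy+ny^2,$$ where $h,k,n$ are real parameters.
   Context: A singular point $r$ of a planar vector field $X$ is semi-elemental if $\det DX(r)=0$ but $\operatorname{tr} DX(r)\neq 0$. A finite double saddle-node $\overline{sn}_{(2)}$ is a semi-elemental finite singular point of multiplicity two whose neighborhood consists of two hyperbolic sectors and one parabolic sector. Infinite singular points are those of the Poincaré compactification on the line at infinity; e.g. in the chart $x=1/z$, $y=u/z$ the line at infinity is $z=0$ and the point at infinity in the direction of the $x$-axis is $(u,z)=(0,0)$. An infinite singular point is a saddle-node of type $\overline{\binom{0}{2}}SN$ if it is a semi-elemental saddle-node of multiplicity two on the line at infinity, formed by the collision of an infinite saddle with an infinite node, i.e. its eigendirection with zero eigenvalue is the line at infinity. *)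

theory Defs
  imports "HOL-Analysis.Analysis"
begin

record qpoly =
  c00 :: real
  c10 :: real
  c01 :: real
  c20 :: real
  c11 :: real
  c02 :: real

definition qev :: "qpoly \<Rightarrow> 'a::real_field \<Rightarrow> 'a \<Rightarrow> 'a" where
  "qev p x y = of_real (c00 p) + of_real (c10 p) * x + of_real (c01 p) * y
     + of_real (c20 p) * x^2 + of_real (c11 p) * x * y + of_real (c02 p) * y^2"

text \<open>Homogenization: z^2 p(x/z, y/z).\<close>
definition qhom :: "qpoly \<Rightarrow> 'a::real_field \<Rightarrow> 'a \<Rightarrow> 'a \<Rightarrow> 'a" where
  "qhom p x y z = of_real (c20 p) * x^2 + of_real (c11 p) * x * y + of_real (c02 p) * y^2
     + z * (of_real (c10 p) * x + of_real (c01 p) * y) + z^2 * of_real (c00 p)"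

definition is_quadratic :: "qpoly \<Rightarrow> qpoly \<Rightarrow> bool" where
  "is_quadratic P Q \<longleftrightarrow>
     (c20 P, c11 P, c02 P, c20 Q, c11 Q, c02 Q) \<noteq> (0, 0, 0, 0, 0, 0)"

definition d1 :: "(real \<Rightarrow> real \<Rightarrow> real) \<Rightarrow> real \<Rightarrow> real \<Rightarrow> real" where
  "d1 f a b = deriv (\<lambda>x. f x b) a"
definition d2 :: "(real \<Rightarrow> real \<Rightarrow> real) \<Rightarrow> real \<Rightarrow> real \<Rightarrow> real" where
  "d2 f a b = deriv (\<lambda>y. f a y) b"

definition jac_det :: "(real \<Rightarrow> real \<Rightarrow> real) \<Rightarrow> (real \<Rightarrow> real \<Rightarrow> real) \<Rightarrow> real \<Rightarrow> real \<Rightarrow> real" where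
  "jac_det f g a b = d1 f a b * d2 g a b - d2 f a b * d1 g a b"
definition jac_tr :: "(real \<Rightarrow> real \<Rightarrow> real) \<Rightarrow> (real \<Rightarrow> real \<Rightarrow> real) \<Rightarrow> real \<Rightarrow> real \<Rightarrow> real" where
  "jac_tr f g a b = d1 f a b + d2 g a b"

definition semi_elemental :: "(real \<Rightarrow> real \<Rightarrow> real) \<Rightarrow> (real \<Rightarrow> real \<Rightarrow> real) \<Rightarrow> real \<Rightarrow> real \<Rightarrow> bool" where
  "semi_elemental f g a b \<longleftrightarrow> f a b = 0 \<and> g a b = 0 \<and> jac_det f g a b = 0 \<and> jac_tr f g a b \<noteq> 0"

text \<open>Multiplicity of an isolated zero r of a (holomorphic, polynomial) map F
  on the complexification: the local degree, i.e. r is the only zero of F in a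
  closed ball, all nearby values have at most m preimages in the ball, and values
  with exactly m preimages occur arbitrarily close to 0 (generic values).
  For polynomial maps C^2 -> C^2 this is the intersection multiplicity.\<close>
definition zero_mult :: "('a::real_normed_vector \<Rightarrow> 'a) \<Rightarrow> 'a \<Rightarrow> nat \<Rightarrow> bool" where
  "zero_mult F r m \<longleftrightarrow>
     (\<exists>\<delta>>0. {z \<in> cball r \<delta>. F z = 0} = {r} \<and>
        (\<exists>\<eta>>0. \<forall>c. norm c < \<eta> \<longrightarrow>
            finite {z \<in> ball r \<delta>. F z = c} \<and> card {z \<in> ball r \<delta>. F z = c} \<le> m) \<and>
        (\<forall>\<epsilon>>0. \<exists>c. norm c < \<epsilon> \<and>
            finite {z \<in> ball r \<delta>. F z = c} \<and> card {z \<in> ball r \<delta>. F z = c} = m))"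

text \<open>Finite semi-elemental singular point of multiplicity two (a semi-elemental
  point of even multiplicity 2 is a saddle-node: two hyperbolic sectors and one
  parabolic sector).\<close>
definition finite_double_saddle_node :: "qpoly \<Rightarrow> qpoly \<Rightarrow> real \<Rightarrow> real \<Rightarrow> bool" where
  "finite_double_saddle_node P Q r1 r2 \<longleftrightarrow>
     semi_elemental (\<lambda>x y. qev P x y) (\<lambda>x y. qev Q x y) r1 r2 \<and>
     zero_mult (\<lambda>(x::complex, y::complex). (qev P x y, qev Q x y))
               (complex_of_real r1, complex_of_real r2) 2"

text \<open>Poincare compactification, local chart at the point at infinity in the
  direction of v = (v1,v2) \<noteq> 0.  We rotate-scale coordinates by
  R = [[v1,-v2],[v2,v1]] (so R e1 = v), take the field adj(R) X(R w), and use the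
  chart x = 1/z, y = u/z, multiplied by z^2 (degree two):
  u' = Q~(1,u,z) - u P~(1,u,z),  z' = - z P~(1,u,z), with ~ the homogenization.
  The line at infinity is z = 0 and the point in direction v is (u,z) = (0,0).\<close>
definition chart_P :: "qpoly \<Rightarrow> qpoly \<Rightarrow> real \<Rightarrow> real \<Rightarrow> 'a::real_field \<Rightarrow> 'a \<Rightarrow> 'a" where
  "chart_P P Q v1 v2 u z =
     (let xi = of_real v1 - of_real v2 * u; eta = of_real v2 + of_real v1 * u
      in of_real v1 * qhom P xi eta z + of_real v2 * qhom Q xi eta z)"
definition chart_Q :: "qpoly \<Rightarrow> qpoly \<Rightarrow> real \<Rightarrow> real \<Rightarrow> 'a::real_field \<Rightarrow> 'a \<Rightarrow> 'a" where
  "chart_Q P Q v1 v2 u z =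
     (let xi = of_real v1 - of_real v2 * u; eta = of_real v2 + of_real v1 * u
      in - of_real v2 * qhom P xi eta z + of_real v1 * qhom Q xi eta z)"

definition chart_U :: "qpoly \<Rightarrow> qpoly \<Rightarrow> real \<Rightarrow> real \<Rightarrow> 'a::real_field \<Rightarrow> 'a \<Rightarrow> 'a" where
  "chart_U P Q v1 v2 u z = chart_Q P Q v1 v2 u z - u * chart_P P Q v1 v2 u z"
definition chart_Z :: "qpoly \<Rightarrow> qpoly \<Rightarrow> real \<Rightarrow> real \<Rightarrow> 'a::real_field \<Rightarrow> 'a \<Rightarrow> 'a" where
  "chart_Z P Q v1 v2 u z = - z * chart_P P Q v1 v2 u z"

text \<open>Infinite saddle-node of type overline{(0 2)}SN at the point at infinity in
  direction v: semi-elemental singular point of the chart field of multiplicity two,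
  whose eigendirection with zero eigenvalue is the line at infinity z = 0
  (i.e. the vector (1,0) lies in the kernel of the Jacobian).\<close>
definition infinite_saddle_node_02 :: "qpoly \<Rightarrow> qpoly \<Rightarrow> real \<Rightarrow> real \<Rightarrow> bool" where
  "infinite_saddle_node_02 P Q v1 v2 \<longleftrightarrow>
     (let U = (\<lambda>u z. chart_U P Q v1 v2 (u::real) z); Z = (\<lambda>u z. chart_Z P Q v1 v2 (u::real) z)
      in semi_elemental U Z 0 0 \<and> d1 U 0 0 = 0 \<and> d1 Z 0 0 = 0 \<and>
         zero_mult (\<lambda>(u::complex, z::complex). (chart_U P Q v1 v2 u z, chart_Z P Q v1 v2 u z))
                   (0, 0) 2)"

end

theory Submission
  imports Defs
begin

text \<open>Let \<open>J\<close> be the Jacobian at the saddle-node \<open>r\<close>: it has rank one, trace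
  \<open>\<lambda> \<noteq> 0\<close> and kernel spanned by \<open>v\<close>, so for \<open>w = (-v\<^sub>2, v\<^sub>1)\<close> the vector
  \<open>J w\<close> is a \<open>\<lambda>\<close>-eigenvector (Cayley--Hamilton) and \<open>det (v, J w) = \<lambda> |v|\<^sup>2\<close>.
  In the chart at infinity, the singular point says that the quadratic part \<open>F\<^sub>2\<close> maps \<open>v\<close>
  to \<open>(K / |v|\<^sup>2) v\<close>, nonzero trace says \<open>K \<noteq> 0\<close>, and the zero eigenvalue along
  the line at infinity says \<open>det (v, B (v, w)) = K\<close> for the polar form \<open>B\<close> of \<open>F\<^sub>2\<close>.
  In the affine frame at \<open>r\<close> with axes \<open>e\<^sub>1 = \<alpha> v\<close>, \<open>\<alpha> = \<lambda> |v|\<^sup>2 / K\<close>, and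
  \<open>e\<^sub>2 = J w\<close>, the linear part is \<open>\<lambda> w\<^sub>2 e\<^sub>2\<close>, \<open>F\<^sub>2 (e\<^sub>1) = \<lambda> e\<^sub>1\<close>, and the
  \<open>e\<^sub>2\<close>-component of \<open>B (e\<^sub>1, e\<^sub>2)\<close> is \<open>\<lambda>\<close>; the remaining coefficients are free and
  give \<open>h, k, n\<close>.\<close>

definition qform :: "qpoly \<Rightarrow> real \<Rightarrow> real \<Rightarrow> real" where
  "qform p x y = c20 p * x^2 + c11 p * x * y + c02 p * y^2"

definition qpolar :: "qpoly \<Rightarrow> real \<Rightarrow> real \<Rightarrow> real \<Rightarrow> real \<Rightarrow> real" where
  "qpolar p x1 y1 x2 y2 = 2 * c20 p * x1 * x2 + c11 p * (x1 * y2 + y1 * x2) + 2 * c02 p * y1 * y2"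

definition qdx :: "qpoly \<Rightarrow> real \<Rightarrow> real \<Rightarrow> real" where
  "qdx p x y = c10 p + 2 * c20 p * x + c11 p * y"

definition qdy :: "qpoly \<Rightarrow> real \<Rightarrow> real \<Rightarrow> real" where
  "qdy p x y = c01 p + c11 p * x + 2 * c02 p * y"

lemma d1_qev: "d1 (\<lambda>x y. qev p x y) a b = qdx p a b"
  unfolding d1_def qdx_def
  by (rule DERIV_imp_deriv) (auto simp: qev_def algebra_simps intro!: derivative_eq_intros)

lemma d2_qev: "d2 (\<lambda>x y. qev p x y) a b = qdy p a b"
  unfolding d2_def qdy_def qev_def[abs_def]
  by (rule DERIV_imp_deriv) (auto simp: qev_def algebra_simps intro!: derivative_eq_intros)

lemma qev_taylor:
  "qev p (x + dx) (y + dy) = (qev p x y :: real) + qdx p x y * dx + qdy p x y * dy + qform p dx dy"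
  by (simp add: qev_def qdx_def qdy_def qform_def power2_eq_square algebra_simps)

lemma qform_lincomb:
  "qform p (s * x1 + t * x2) (s * y1 + t * y2)
     = s^2 * qform p x1 y1 + s * t * qpolar p x1 y1 x2 y2 + t^2 * qform p x2 y2"
  by (simp add: qform_def qpolar_def power2_eq_square algebra_simps)

lemma qev_affine:
  "qev p (a * w1 + b * w2 + x) (c * w1 + d * w2 + y)
     = (qev p x y :: real) + (qdx p x y * a + qdy p x y * c) * w1 + (qdx p x y * b + qdy p x y * d) * w2
       + w1^2 * qform p a c + w1 * w2 * qpolar p a c b d + w2^2 * qform p b d"
  using qev_taylor[of p x "a * w1 + b * w2" y "c * w1 + d * w2"]
    qform_lincomb[of p w1 a w2 b c d]
  by (simp add: algebra_simps)

lemma qform_scale: "qform p (t * x) (t * y) = t^2 * qform p x y"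
  by (simp add: qform_def power2_eq_square algebra_simps)

lemma qpolar_scale_left: "qpolar p (t * x1) (t * y1) x2 y2 = t * qpolar p x1 y1 x2 y2"
  by (simp add: qpolar_def algebra_simps)

lemma chart_U_origin:
  "chart_U P Q v1 v2 (0::real) 0 = v1 * qform Q v1 v2 - v2 * qform P v1 v2"
  by (simp add: chart_U_def chart_Q_def chart_P_def qhom_def qform_def Let_def algebra_simps)

lemma d2_chart_Z_origin:
  "d2 (\<lambda>u z. chart_Z P Q v1 v2 (u::real) z) 0 0 = - (v1 * qform P v1 v2 + v2 * qform Q v1 v2)"
  unfolding d2_def chart_Z_def[abs_def] chart_P_def[abs_def]
  by (rule DERIV_imp_deriv)
     (auto simp: chart_Z_def chart_P_def qhom_def qform_def Let_def power2_eq_square algebra_simps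
           intro!: derivative_eq_intros)

lemma d1_chart_U_origin:
  "d1 (\<lambda>u z. chart_U P Q v1 v2 (u::real) z) 0 0
     = v1 * qpolar Q v1 v2 (- v2) v1 - v2 * qpolar P v1 v2 (- v2) v1
       - (v1 * qform P v1 v2 + v2 * qform Q v1 v2)"
  unfolding d1_def
  by (rule DERIV_imp_deriv)
     (auto simp: chart_U_def chart_Q_def chart_P_def qhom_def qform_def qpolar_def Let_def
           power2_eq_square algebra_simps intro!: derivative_eq_intros)

lemma basis_coordinates:
  fixes a b c d p q :: real
  assumes "a * d - b * c \<noteq> 0"
  obtains s t where "p = s * a + t * b" "q = s * c + t * d" "t * (a * d - b * c) = a * q - c * p"
proof
  let ?D = "a * d - b * c"
  show "p = (d * p - b * q) / ?D * a + (a * q - c * p) / ?D * b"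
    using assms by (simp add: divide_simps) (simp add: algebra_simps)
  show "q = (d * p - b * q) / ?D * c + (a * q - c * p) / ?D * d"
    using assms by (simp add: divide_simps) (simp add: algebra_simps)
  show "(a * q - c * p) / ?D * ?D = a * q - c * p"
    using assms by simp
qed

lemma singular_image_eigenvector:
  fixes p q r s x y :: real
  assumes "p * s - q * r = 0"
  shows "p * (p * x + q * y) + q * (r * x + s * y) = (p + s) * (p * x + q * y)"
    and "r * (p * x + q * y) + s * (r * x + s * y) = (p + s) * (r * x + s * y)"
  using assms by algebra+

lemma cross_kernel_image:
  fixes p q r s v1 v2 :: real
  assumes "p * v1 + q * v2 = 0" "r * v1 + s * v2 = 0"
  shows "v1 * (s * v1 - r * v2) - v2 * (q * v1 - p * v2) = (p + s) * (v1^2 + v2^2)"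
  using assms by algebra

lemma radial_qform_parallel:
  assumes "v1 * qform Q v1 v2 - v2 * qform P v1 v2 = 0"
  shows "(v1^2 + v2^2) * qform P v1 v2 = (v1 * qform P v1 v2 + v2 * qform Q v1 v2) * v1"
    and "(v1^2 + v2^2) * qform Q v1 v2 = (v1 * qform P v1 v2 + v2 * qform Q v1 v2) * v2"
  using assms by algebra+

lemma cross_qpolar_kernel_image:
  fixes p q r s v1 v2 :: real
  assumes radial: "v1 * qform Q v1 v2 - v2 * qform P v1 v2 = 0"
    and ker: "p * v1 + q * v2 = 0" "r * v1 + s * v2 = 0"
  shows "v1 * qpolar Q v1 v2 (q * v1 - p * v2) (s * v1 - r * v2)
           - v2 * qpolar P v1 v2 (q * v1 - p * v2) (s * v1 - r * v2)
         = (p + s) * (v1 * qpolar Q v1 v2 (- v2) v1 - v2 * qpolar P v1 v2 (- v2) v1)"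
proof (cases "v1^2 + v2^2 = 0")
  case True
  then show ?thesis by (simp add: sum_power2_eq_zero_iff qpolar_def)
next
  case False
  have "(v1^2 + v2^2) * (v1 * qpolar Q v1 v2 (q * v1 - p * v2) (s * v1 - r * v2)
           - v2 * qpolar P v1 v2 (q * v1 - p * v2) (s * v1 - r * v2))
        = (v1^2 + v2^2) * ((p + s) * (v1 * qpolar Q v1 v2 (- v2) v1 - v2 * qpolar P v1 v2 (- v2) v1))"
    using radial ker unfolding qform_def qpolar_def by algebra
  with False show ?thesis by (metis mult_left_cancel)
qed

lemma saddle_node_frame:
  fixes P Q :: qpoly and p q r s v1 v2 :: real
  defines "K \<equiv> v1 * qform P v1 v2 + v2 * qform Q v1 v2"
  assumes sing: "p * s - q * r = 0" and tr: "p + s \<noteq> 0"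
    and ker: "p * v1 + q * v2 = 0" "r * v1 + s * v2 = 0" and v_nz: "(v1, v2) \<noteq> (0, 0)"
    and radial: "v1 * qform Q v1 v2 - v2 * qform P v1 v2 = 0" and K_nz: "K \<noteq> 0"
    and polar: "v1 * qpolar Q v1 v2 (- v2) v1 - v2 * qpolar P v1 v2 (- v2) v1 = K"
  obtains a b c d where "a * d - b * c \<noteq> 0"
    and "p * a + q * c = 0" "r * a + s * c = 0"
    and "p * b + q * d = (p + s) * b" "r * b + s * d = (p + s) * d"
    and "qform P a c = (p + s) * a" "qform Q a c = (p + s) * c"
    and "a * qpolar Q a c b d - c * qpolar P a c b d = (p + s) * (a * d - b * c)"
proof
  define N where "N = v1^2 + v2^2"
  define \<alpha> where "\<alpha> = (p + s) * N / K"
  have N_nz: "N \<noteq> 0"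
    using v_nz by (auto simp: N_def sum_power2_eq_zero_iff)
  have \<alpha>K: "\<alpha> * K = (p + s) * N"
    using K_nz by (simp add: \<alpha>_def)
  have \<alpha>_nz: "\<alpha> \<noteq> 0"
    using tr N_nz K_nz by (simp add: \<alpha>_def)
  let ?a = "\<alpha> * v1" and ?c = "\<alpha> * v2" and ?b = "q * v1 - p * v2" and ?d = "s * v1 - r * v2"
  have det: "?a * ?d - ?b * ?c = \<alpha> * ((p + s) * N)"
  proof -
    have "?a * ?d - ?b * ?c = \<alpha> * (v1 * ?d - v2 * ?b)"
      by (simp add: algebra_simps)
    then show ?thesis
      using cross_kernel_image[OF ker] by (simp add: N_def)
  qed
  then show "?a * ?d - ?b * ?c \<noteq> 0"
    using \<alpha>_nz tr N_nz by simp
  show "p * ?a + q * ?c = 0" "r * ?a + s * ?c = 0"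
    using ker by (metis mult.left_commute distrib_left mult_zero_right)+
  show "p * ?b + q * ?d = (p + s) * ?b" "r * ?b + s * ?d = (p + s) * ?d"
    using singular_image_eigenvector[OF sing, of "- v2" v1] by (simp_all add: algebra_simps)
  have rescale: "\<alpha> * X = (p + s) * x" if "N * X = K * x" for X x
  proof -
    have "\<alpha> * X = (p + s) * (N * X) / K"
      by (simp add: \<alpha>_def)
    also have "\<dots> = (p + s) * x"
      using that K_nz by simp
    finally show ?thesis .
  qed
  have "\<alpha> * qform P v1 v2 = (p + s) * v1" "\<alpha> * qform Q v1 v2 = (p + s) * v2"
    using radial_qform_parallel[OF radial] by (auto intro!: rescale simp: N_def K_def)
  then show "qform P ?a ?c = (p + s) * ?a" "qform Q ?a ?c = (p + s) * ?c"
    by (simp_all add: qform_scale power2_eq_square algebra_simps)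
  have "?a * qpolar Q ?a ?c ?b ?d - ?c * qpolar P ?a ?c ?b ?d
        = \<alpha>^2 * (v1 * qpolar Q v1 v2 ?b ?d - v2 * qpolar P v1 v2 ?b ?d)"
    by (simp add: qpolar_scale_left power2_eq_square algebra_simps)
  also have "\<dots> = \<alpha> * (p + s) * (\<alpha> * K)"
    using cross_qpolar_kernel_image[OF radial ker] polar by (simp add: power2_eq_square)
  also have "\<dots> = (p + s) * (?a * ?d - ?b * ?c)"
    using \<alpha>K det by simp
  finally show "?a * qpolar Q ?a ?c ?b ?d - ?c * qpolar P ?a ?c ?b ?d = (p + s) * (?a * ?d - ?b * ?c)" .
qed

lemma normal_form_in_frame:
  fixes P Q :: qpoly and r1 r2 a b c d \<mu> :: real
  assumes zero: "qev P r1 r2 = (0::real)" "qev Q r1 r2 = (0::real)"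
    and det: "a * d - b * c \<noteq> 0" and \<mu>_nz: "\<mu> \<noteq> 0"
    and ker: "qdx P r1 r2 * a + qdy P r1 r2 * c = 0" "qdx Q r1 r2 * a + qdy Q r1 r2 * c = 0"
    and eig: "qdx P r1 r2 * b + qdy P r1 r2 * d = \<mu> * b" "qdx Q r1 r2 * b + qdy Q r1 r2 * d = \<mu> * d"
    and form: "qform P a c = \<mu> * a" "qform Q a c = \<mu> * c"
    and cross: "a * qpolar Q a c b d - c * qpolar P a c b d = \<mu> * (a * d - b * c)"
  shows "\<exists>h k n. \<forall>w1 w2.
      qev P (a * w1 + b * w2 + r1) (c * w1 + d * w2 + r2)
        = \<mu> * (a * (w1^2 + 2 * h * w1 * w2 + k * w2^2) + b * (w2 + w1 * w2 + n * w2^2))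
    \<and> qev Q (a * w1 + b * w2 + r1) (c * w1 + d * w2 + r2)
        = \<mu> * (c * (w1^2 + 2 * h * w1 * w2 + k * w2^2) + d * (w2 + w1 * w2 + n * w2^2))"
proof -
  obtain s1 t1 where s1: "qpolar P a c b d = s1 * a + t1 * b" "qpolar Q a c b d = s1 * c + t1 * d"
    and t1: "t1 * (a * d - b * c) = a * qpolar Q a c b d - c * qpolar P a c b d"
    using basis_coordinates[OF det] by metis
  have "t1 = \<mu>"
    using t1 cross det by simp
  obtain s2 t2 where s2: "qform P b d = s2 * a + t2 * b" "qform Q b d = s2 * c + t2 * d"
    using basis_coordinates[OF det] by metis
  define h k n where "h = s1 / (2 * \<mu>)" and "k = s2 / \<mu>" and "n = t2 / \<mu>"
  have coeffs: "s1 = \<mu> * (2 * h)" "s2 = \<mu> * k" "t2 = \<mu> * n"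
    using \<mu>_nz by (simp_all add: h_def k_def n_def)
  show ?thesis
  proof (rule exI[of _ h], rule exI[of _ k], rule exI[of _ n], intro allI conjI)
    fix w1 w2
    show "qev P (a * w1 + b * w2 + r1) (c * w1 + d * w2 + r2)
        = \<mu> * (a * (w1^2 + 2 * h * w1 * w2 + k * w2^2) + b * (w2 + w1 * w2 + n * w2^2))"
      and "qev Q (a * w1 + b * w2 + r1) (c * w1 + d * w2 + r2)
        = \<mu> * (c * (w1^2 + 2 * h * w1 * w2 + k * w2^2) + d * (w2 + w1 * w2 + n * w2^2))"
      unfolding qev_affine zero ker eig form s1 s2 \<open>t1 = \<mu>\<close> coeffs
      by (simp_all add: algebra_simps)
  qed
qed

theorem proposition2p2:
  fixes P Q :: qpoly and r1 r2 v1 v2 :: real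
  assumes quad: "is_quadratic P Q"
    and fin: "finite_double_saddle_node P Q r1 r2"
    and v_nz: "(v1, v2) \<noteq> (0, 0)"
    and v_ker1: "d1 (\<lambda>x y. qev P x y) r1 r2 * v1 + d2 (\<lambda>x y. qev P x y) r1 r2 * v2 = 0"
    and v_ker2: "d1 (\<lambda>x y. qev Q x y) r1 r2 * v1 + d2 (\<lambda>x y. qev Q x y) r1 r2 * v2 = 0"
    and inf: "infinite_saddle_node_02 P Q v1 v2"
  shows "\<exists>a b c d e f \<mu> h k n :: real. a * d - b * c \<noteq> 0 \<and> \<mu> \<noteq> 0 \<and>
     (\<forall>w1 w2. qev P (a * w1 + b * w2 + e) (c * w1 + d * w2 + f)
                = \<mu> * (a * (w1^2 + 2 * h * w1 * w2 + k * w2^2) + b * (w2 + w1 * w2 + n * w2^2))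
            \<and> qev Q (a * w1 + b * w2 + e) (c * w1 + d * w2 + f)
                = \<mu> * (c * (w1^2 + 2 * h * w1 * w2 + k * w2^2) + d * (w2 + w1 * w2 + n * w2^2)))"
proof -
  let ?p = "qdx P r1 r2" and ?q = "qdy P r1 r2" and ?r = "qdx Q r1 r2" and ?s = "qdy Q r1 r2"
  have zero: "qev P r1 r2 = (0::real)" "qev Q r1 r2 = (0::real)"
    and sing: "?p * ?s - ?q * ?r = 0" and tr: "?p + ?s \<noteq> 0"
    using fin by (auto simp: finite_double_saddle_node_def semi_elemental_def jac_det_def jac_tr_def
        d1_qev d2_qev)
  have ker: "?p * v1 + ?q * v2 = 0" "?r * v1 + ?s * v2 = 0"
    using v_ker1 v_ker2 by (simp_all add: d1_qev d2_qev)
  have radial: "v1 * qform Q v1 v2 - v2 * qform P v1 v2 = 0"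
    and K_nz: "v1 * qform P v1 v2 + v2 * qform Q v1 v2 \<noteq> 0"
    and polar: "v1 * qpolar Q v1 v2 (- v2) v1 - v2 * qpolar P v1 v2 (- v2) v1
                = v1 * qform P v1 v2 + v2 * qform Q v1 v2"
    using inf by (auto simp: infinite_saddle_node_02_def Let_def semi_elemental_def jac_tr_def
        chart_U_origin d1_chart_U_origin d2_chart_Z_origin)
  obtain a b c d where det: "a * d - b * c \<noteq> 0" and frame:
    "?p * a + ?q * c = 0" "?r * a + ?s * c = 0"
    "?p * b + ?q * d = (?p + ?s) * b" "?r * b + ?s * d = (?p + ?s) * d"
    "qform P a c = (?p + ?s) * a" "qform Q a c = (?p + ?s) * c"
    "a * qpolar Q a c b d - c * qpolar P a c b d = (?p + ?s) * (a * d - b * c)"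
    by (rule saddle_node_frame[OF sing tr ker v_nz radial K_nz polar])
  show ?thesis
    using normal_form_in_frame[OF zero det tr frame] det tr by blast
qed

end
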